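(* If $\{T_i\}_{i=1}^M$ is an extremal quantum $1$-tester on $\mathcal H_2\otimes\mathcal H_1$ with normalization $\sum_iT_i=I_2\otimes\frac1{d_1}I_1$, then $\{d_1T_i\}_{i=1}^M$ is an extremal POVM on $\mathcal H_2\otimes\mathcal H_1$.
   Context: $d_1=\dim\mathcal H_1<\infty$. A quantum $1$-tester with $M$ outcomes is a family of positive operators $\{T_i\}_{i=1}^M$ on $\mathcal H_2\otimes\mathcal H_1$ with $\sum_iT_i=I_2\otimes\rho$ for a density operator $\rho$; extremal means an extreme point of the convex set of all such testers with $M$ outcomes. An extremal POVM with $M$ outcomes is an extreme point of the convex set of $M$-outcome POVMs (positive operators summing to the identity). *)

theory Defs
  imports Complex_Main
begin

text \<open>Operators on a finite-dimensional Hilbert space with orthonormal basis indexed by the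
finite type 'i are represented as complex matrices 'i \<Rightarrow> 'i \<Rightarrow> complex.
The space H2 \<otimes> H1 has basis indexed by 'b \<times> 'a, where 'b indexes H2 and 'a indexes H1.
M-outcome families are indexed by a finite type 'm with CARD('m) = M.\<close>

type_synonym 'i op = "'i \<Rightarrow> 'i \<Rightarrow> complex"

definition id_op :: "'i op" where
  "id_op = (\<lambda>i j. if i = j then 1 else 0)"

definition op_trace :: "('i::finite) op \<Rightarrow> complex" where
  "op_trace A = (\<Sum>i\<in>UNIV. A i i)"

definition positive_op :: "('i::finite) op \<Rightarrow> bool" where
  "positive_op A \<longleftrightarrow> (\<forall>v :: 'i \<Rightarrow> complex.
     let q = (\<Sum>i\<in>UNIV. \<Sum>j\<in>UNIV. cnj (v i) * A i j * v j) in Im q = 0 \<and> Re q \<ge> 0)"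

definition density_op :: "('i::finite) op \<Rightarrow> bool" where
  "density_op \<rho> \<longleftrightarrow> positive_op \<rho> \<and> op_trace \<rho> = 1"

definition tensor_op :: "'b op \<Rightarrow> 'a op \<Rightarrow> ('b \<times> 'a) op" where
  "tensor_op X Y = (\<lambda>(b, a) (b', a'). X b b' * Y a a')"

definition sum_ops :: "('m::finite \<Rightarrow> 'i op) \<Rightarrow> 'i op" where
  "sum_ops T = (\<lambda>x y. \<Sum>i\<in>UNIV. T i x y)"

definition is_tester :: "('m::finite \<Rightarrow> ('b::finite \<times> 'a::finite) op) \<Rightarrow> bool" where
  "is_tester T \<longleftrightarrow> (\<forall>i. positive_op (T i)) \<and>
     (\<exists>\<rho> :: 'a op. density_op \<rho> \<and> sum_ops T = tensor_op id_op \<rho>)"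

definition is_povm :: "('m::finite \<Rightarrow> ('i::finite) op) \<Rightarrow> bool" where
  "is_povm E \<longleftrightarrow> (\<forall>i. positive_op (E i)) \<and> sum_ops E = id_op"

definition convex_comb :: "real \<Rightarrow> ('m \<Rightarrow> 'i op) \<Rightarrow> ('m \<Rightarrow> 'i op) \<Rightarrow> ('m \<Rightarrow> 'i op)" where
  "convex_comb t Y Z = (\<lambda>k x y. complex_of_real t * Y k x y + complex_of_real (1 - t) * Z k x y)"

definition extreme_in :: "('m \<Rightarrow> 'i op) set \<Rightarrow> ('m \<Rightarrow> 'i op) \<Rightarrow> bool" where
  "extreme_in S X \<longleftrightarrow> X \<in> S \<and>
     (\<forall>Y\<in>S. \<forall>Z\<in>S. \<forall>t. 0 < t \<and> t < 1 \<and> X = convex_comb t Y Z \<longrightarrow> Y = X \<and> Z = X)"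

definition extremal_tester :: "('m::finite \<Rightarrow> ('b::finite \<times> 'a::finite) op) \<Rightarrow> bool" where
  "extremal_tester T \<longleftrightarrow> extreme_in {S. is_tester S} T"

definition extremal_povm :: "('m::finite \<Rightarrow> ('i::finite) op) \<Rightarrow> bool" where
  "extremal_povm E \<longleftrightarrow> extreme_in {S. is_povm S} E"

end

theory Submission
  imports Defs
begin

(* Write d = dim H1 and let S_c X be the family scaled by the real factor c.
   Scaling by a nonzero real is a bijection on families that commutes with convex
   combinations, so it maps extreme points of a set to extreme points of its image; and an
   extreme point of a convex set that lies in a subset is extreme in that subset.
   Scaling a POVM by 1/d gives a tester with normalisation I2 (x) I1/d, because I1/d is a
   density operator.  Hence, with E = S_d T, the set S_{1/d}(POVMs) is a subset of the
   testers containing T = S_{1/d} E, so T is extreme in it; scaling back by d shows that E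
   is an extreme point of the POVMs (E is a POVM since T sums to I/d). *)

definition scale_family :: "real \<Rightarrow> ('m \<Rightarrow> 'i op) \<Rightarrow> ('m \<Rightarrow> 'i op)" where
  "scale_family c X = (\<lambda>k x y. complex_of_real c * X k x y)"

lemma scale_family_scale_family: "scale_family c (scale_family c' X) = scale_family (c * c') X"
  unfolding scale_family_def by (simp add: mult.assoc)

lemma scale_family_one: "scale_family 1 X = X"
  unfolding scale_family_def by simp

lemma scale_family_image_inverse:
  fixes S :: "('m \<Rightarrow> 'i op) set"
  assumes "c \<noteq> 0"
  shows "scale_family c ` scale_family (1 / c) ` S = S"
proof -
  have "scale_family c (scale_family (1 / c) X) = X" for X :: "'m \<Rightarrow> 'i op"
    using assms by (simp add: scale_family_scale_family scale_family_one)
  then show ?thesis by (simp add: image_image)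
qed

lemma scale_family_convex_comb:
  "scale_family c (convex_comb t Y Z) = convex_comb t (scale_family c Y) (scale_family c Z)"
  unfolding scale_family_def convex_comb_def by (simp add: fun_eq_iff algebra_simps)

lemma positive_op_scale:
  fixes A :: "('i::finite) op"
  assumes "positive_op A" "c \<ge> 0"
  shows "positive_op (\<lambda>x y. complex_of_real c * A x y)"
  unfolding positive_op_def Let_def
proof
  fix v :: "'i \<Rightarrow> complex"
  let ?q = "\<Sum>i\<in>UNIV. \<Sum>j\<in>UNIV. cnj (v i) * A i j * v j"
  have scaled: "(\<Sum>i\<in>UNIV. \<Sum>j\<in>UNIV. cnj (v i) * (complex_of_real c * A i j) * v j)
      = complex_of_real c * ?q"
    by (simp add: sum_distrib_left mult_ac)
  have "Im ?q = 0 \<and> Re ?q \<ge> 0" using assms(1) unfolding positive_op_def Let_def by blast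
  then show "Im (\<Sum>i\<in>UNIV. \<Sum>j\<in>UNIV. cnj (v i) * (complex_of_real c * A i j) * v j) = 0 \<and>
      0 \<le> Re (\<Sum>i\<in>UNIV. \<Sum>j\<in>UNIV. cnj (v i) * (complex_of_real c * A i j) * v j)"
    unfolding scaled using assms(2) by simp
qed

text \<open>The identity is positive: its quadratic form is the squared norm.\<close>
lemma positive_op_id: "positive_op (id_op :: ('i::finite) op)"
  unfolding positive_op_def Let_def
proof
  fix v :: "'i \<Rightarrow> complex"
  have row: "(\<Sum>j\<in>UNIV. cnj (v i) * id_op i j * v j) = complex_of_real ((cmod (v i))\<^sup>2)" for i
  proof -
    have "(\<Sum>j\<in>UNIV. cnj (v i) * id_op i j * v j) = (\<Sum>j\<in>UNIV. if i = j then cnj (v i) * v j else 0)"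
      by (intro sum.cong) (auto simp: id_op_def)
    also have "\<dots> = cnj (v i) * v i"
      by simp
    also have "\<dots> = complex_of_real ((cmod (v i))\<^sup>2)"
      using complex_norm_square[of "v i"] by (simp add: mult.commute)
    finally show ?thesis .
  qed
  show "Im (\<Sum>i\<in>UNIV. \<Sum>j\<in>UNIV. cnj (v i) * id_op i j * v j) = 0 \<and>
      0 \<le> Re (\<Sum>i\<in>UNIV. \<Sum>j\<in>UNIV. cnj (v i) * id_op i j * v j)"
    by (simp add: row sum_nonneg)
qed

lemma density_op_maximally_mixed:
  "density_op (\<lambda>x y. complex_of_real (1 / real (card (UNIV :: ('i::finite) set))) * (id_op :: 'i op) x y)"
  unfolding density_op_def
proof
  show "positive_op (\<lambda>x y. complex_of_real (1 / real (card (UNIV :: 'i set))) * (id_op :: 'i op) x y)"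
    by (rule positive_op_scale[OF positive_op_id]) simp
  show "op_trace (\<lambda>x y. complex_of_real (1 / real (card (UNIV :: 'i set))) * (id_op :: 'i op) x y) = 1"
    unfolding op_trace_def id_op_def by simp
qed

lemma sum_ops_scale_family:
  "sum_ops (scale_family c X) = (\<lambda>x y. complex_of_real c * sum_ops X x y)"
  unfolding sum_ops_def scale_family_def by (simp add: sum_distrib_left)

lemma extreme_in_subset:
  assumes "extreme_in S X" "X \<in> S'" "S' \<subseteq> S"
  shows "extreme_in S' X"
  using assms unfolding extreme_in_def by blast

lemma extreme_in_scale_family:
  assumes "extreme_in S X" "c \<noteq> 0"
  shows "extreme_in (scale_family c ` S) (scale_family c X)"
  unfolding extreme_in_def
proof (intro conjI ballI allI impI)
  show "scale_family c X \<in> scale_family c ` S"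
    using assms(1) unfolding extreme_in_def by blast
next
  fix Y Z t
  assume "Y \<in> scale_family c ` S" "Z \<in> scale_family c ` S"
    and split: "0 < t \<and> t < 1 \<and> scale_family c X = convex_comb t Y Z"
  then obtain Y' Z' where Y': "Y' \<in> S" "Y = scale_family c Y'"
    and Z': "Z' \<in> S" "Z = scale_family c Z'" by blast
  have unscale: "scale_family (1 / c) (scale_family c W) = W" for W :: "'a \<Rightarrow> 'b op"
    using assms(2) by (simp add: scale_family_scale_family scale_family_one)
  have "X = convex_comb t Y' Z'"
    using arg_cong[OF split[THEN conjunct2, THEN conjunct2], of "scale_family (1 / c)"]
    by (simp add: Y' Z' unscale scale_family_convex_comb)
  with Y' Z' split assms(1) have "Y' = X \<and> Z' = X" unfolding extreme_in_def by blast
  with Y' Z' show "Y = scale_family c X" "Z = scale_family c X" by auto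
qed

lemma is_tester_scaled_povm:
  fixes E :: "'m::finite \<Rightarrow> ('b::finite \<times> 'a::finite) op"
  assumes "is_povm E"
  shows "is_tester (scale_family (1 / real (card (UNIV :: 'a set))) E)"
  unfolding is_tester_def
proof (intro conjI allI exI)
  show "positive_op (scale_family (1 / real (card (UNIV :: 'a set))) E k)" for k
    using assms unfolding is_povm_def scale_family_def by (intro positive_op_scale) auto
  show "density_op (\<lambda>x y. complex_of_real (1 / real (card (UNIV :: 'a set))) * (id_op :: 'a op) x y)"
    by (rule density_op_maximally_mixed)
  show "sum_ops (scale_family (1 / real (card (UNIV :: 'a set))) E)
      = tensor_op id_op (\<lambda>x y. complex_of_real (1 / real (card (UNIV :: 'a set))) * (id_op :: 'a op) x y)"
    using assms unfolding is_povm_def sum_ops_scale_family tensor_op_def id_op_def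
    by (auto simp: fun_eq_iff)
qed

lemma is_povm_scale_family:
  fixes T :: "'m::finite \<Rightarrow> ('i::finite) op"
  assumes "\<And>k. positive_op (T k)" "sum_ops T = (\<lambda>x y. complex_of_real (1 / c) * id_op x y)" "c > 0"
  shows "is_povm (scale_family c T)"
  unfolding is_povm_def
proof
  show "\<forall>k. positive_op (scale_family c T k)"
    using assms(1,3) unfolding scale_family_def by (simp add: positive_op_scale)
  show "sum_ops (scale_family c T) = id_op"
    using assms(2,3) by (simp add: sum_ops_scale_family fun_eq_iff)
qed

theorem mainTheorem8:
  fixes T :: "'m::finite \<Rightarrow> ('b::finite \<times> 'a::finite) op"
  assumes "extremal_tester T"
    and "sum_ops T = tensor_op (id_op :: 'b op)
           (\<lambda>x y. (1 / of_nat (card (UNIV :: 'a set))) * (id_op :: 'a op) x y)"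
  shows "extremal_povm (\<lambda>k x y. of_nat (card (UNIV :: 'a set)) * T k x y)"
proof -
  define d where "d = real (card (UNIV :: 'a set))"
  define POVMs where "POVMs = {S :: 'm \<Rightarrow> ('b \<times> 'a) op. is_povm S}"
  have d_pos: "d > 0" unfolding d_def by (simp add: finite_UNIV_card_ge_0)
  have E_eq: "(\<lambda>k x y. of_nat (card (UNIV :: 'a set)) * T k x y) = scale_family d T"
    unfolding d_def scale_family_def by simp
  have T_eq: "T = scale_family (1 / d) (scale_family d T)"
    using d_pos by (simp add: scale_family_scale_family scale_family_one)
  have "sum_ops T = (\<lambda>x y. complex_of_real (1 / d) * id_op x y)"
    using assms(2) unfolding tensor_op_def id_op_def d_def by (auto simp: fun_eq_iff)
  then have "scale_family d T \<in> POVMs"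
    using assms(1) d_pos unfolding POVMs_def extremal_tester_def extreme_in_def is_tester_def
    by (simp add: is_povm_scale_family)
  then have "T \<in> scale_family (1 / d) ` POVMs"
    by (subst T_eq) (rule imageI)
  moreover have "scale_family (1 / d) ` POVMs \<subseteq> {S. is_tester S}"
    unfolding d_def POVMs_def by (intro image_subsetI) (simp add: is_tester_scaled_povm)
  ultimately have "extreme_in (scale_family (1 / d) ` POVMs) T"
    by (rule extreme_in_subset[OF assms(1)[unfolded extremal_tester_def]])
  then have "extreme_in (scale_family d ` scale_family (1 / d) ` POVMs) (scale_family d T)"
    using d_pos by (simp add: extreme_in_scale_family)
  then show ?thesis
    unfolding extremal_povm_def E_eq POVMs_def using d_pos by (simp add: scale_family_image_inverse)
qed

end
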